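(* (i) If $H_1$ and $H_2$ are $\operatorname{IR}$-graphs, then their Cartesian product $H_1 \,\square\, H_2$ is an $\operatorname{IR}$-graph. (ii) For every $n\geq 1$, the hypercube $Q_n$ is an $\operatorname{IR}$-graph; in particular $C_4\cong Q_2$ is an $\operatorname{IR}$-graph.
   Context: All graphs are finite and simple. For a graph $G=(V,E)$, $D\subseteq V$ and $v\in D$, the private neighbourhood of $v$ with respect to $D$ is $\operatorname{PN}(v,D)=N[v]-N[D-\{v\}]$, where $N[\cdot]$ denotes closed neighbourhood. A set $D$ is irredundant if $\operatorname{PN}(v,D)\neq\varnothing$ for every $v\in D$. The upper irredundance number $\operatorname{IR}(G)$ is the largest cardinality of an irredundant set of $G$, and an $\operatorname{IR}(G)$-set is an irredundant set of cardinality $\operatorname{IR}(G)$. The $\operatorname{IR}$-graph $G(\operatorname{IR})$ of $G$ has the $\operatorname{IR}(G)$-sets as vertices, two such sets $D,D'$ being adjacent iff there are $u\in D$, $v\in D'$ with $uv\in E(G)$ and $D'=(D-\{u\})\cup\{v\}$. A graph $H$ is an $\operatorname{IR}$-graph if $H\cong G(\operatorname{IR})$ for some graph $G$. *)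

theory Defs
  imports Main
begin

type_synonym 'a graph = "'a set \<times> 'a set set"

definition verts :: "'a graph \<Rightarrow> 'a set" where "verts G = fst G"
definition edges :: "'a graph \<Rightarrow> 'a set set" where "edges G = snd G"

definition graph :: "'a graph \<Rightarrow> bool" where
  "graph G \<longleftrightarrow> finite (verts G) \<and>
     (\<forall>e\<in>edges G. \<exists>u v. e = {u, v} \<and> u \<noteq> v \<and> u \<in> verts G \<and> v \<in> verts G)"

definition adj :: "'a graph \<Rightarrow> 'a \<Rightarrow> 'a \<Rightarrow> bool" where
  "adj G u v \<longleftrightarrow> {u, v} \<in> edges G"

definition cnbhd :: "'a graph \<Rightarrow> 'a \<Rightarrow> 'a set" where
  "cnbhd G v = {v} \<union> {u \<in> verts G. adj G u v}"

definition cnbhd_set :: "'a graph \<Rightarrow> 'a set \<Rightarrow> 'a set" where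
  "cnbhd_set G S = (\<Union>v\<in>S. cnbhd G v)"

definition PN :: "'a graph \<Rightarrow> 'a \<Rightarrow> 'a set \<Rightarrow> 'a set" where
  "PN G v D = cnbhd G v - cnbhd_set G (D - {v})"

definition irredundant :: "'a graph \<Rightarrow> 'a set \<Rightarrow> bool" where
  "irredundant G D \<longleftrightarrow> D \<subseteq> verts G \<and> (\<forall>v\<in>D. PN G v D \<noteq> {})"

definition IR :: "'a graph \<Rightarrow> nat" where
  "IR G = Max {card D | D. irredundant G D}"

definition IR_sets :: "'a graph \<Rightarrow> 'a set set" where
  "IR_sets G = {D. irredundant G D \<and> card D = IR G}"

definition IR_graph_of :: "'a graph \<Rightarrow> 'a set graph" where
  "IR_graph_of G = (IR_sets G,
     {{D, D'} | D D' u v. D \<in> IR_sets G \<and> D' \<in> IR_sets G \<and> u \<in> D \<and> v \<in> D' \<and>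
        adj G u v \<and> D' = (D - {u}) \<union> {v}})"

definition graph_iso :: "'a graph \<Rightarrow> 'b graph \<Rightarrow> bool" where
  "graph_iso G H \<longleftrightarrow> (\<exists>f. bij_betw f (verts G) (verts H) \<and>
     (\<forall>u\<in>verts G. \<forall>v\<in>verts G. adj G u v \<longleftrightarrow> adj H (f u) (f v)))"

text \<open>H is an IR-graph if it is isomorphic to G(IR) for some finite graph G.
  Every finite graph is isomorphic to one with natural-number vertices, so
  we quantify over graphs on nat.\<close>
definition is_IR_graph :: "'a graph \<Rightarrow> bool" where
  "is_IR_graph H \<longleftrightarrow> graph H \<and> (\<exists>G :: nat graph. graph G \<and> graph_iso (IR_graph_of G) H)"

definition cart_prod :: "'a graph \<Rightarrow> 'b graph \<Rightarrow> ('a \<times> 'b) graph" where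
  "cart_prod G H = (verts G \<times> verts H,
     {{(u, v), (u', v)} | u u' v. adj G u u' \<and> v \<in> verts H} \<union>
     {{(u, v), (u, v')} | u v v'. u \<in> verts G \<and> adj H v v'})"

definition hypercube :: "nat \<Rightarrow> bool list graph" where
  "hypercube n = ({xs. length xs = n},
     {{xs, ys} | xs ys. length xs = n \<and> length ys = n \<and>
        card {i. i < n \<and> xs ! i \<noteq> ys ! i} = 1})"

definition C4 :: "nat graph" where
  "C4 = ({0, 1, 2, 3}, {{0, 1}, {1, 2}, {2, 3}, {3, 0}})"

end

theory Submission
  imports Defs "HOL-Library.Countable"
begin

text \<open>
  Private neighbourhoods in a disjoint union G + H are computed componentwise, so the
  irredundant sets of G + H are exactly the unions of an irredundant set of G and one of H.
  Hence IR(G + H) = IR(G) + IR(H), the IR-sets of G + H are the unions of an IR-set of G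
  and an IR-set of H, and exchanging a vertex for a neighbour happens inside one component:
  the IR-graph of G + H is the Cartesian product of the IR-graphs of G and H, which gives (i).
  For (ii), the IR-sets of K_2 are its two singletons, so the IR-graph of K_2 is K_2 = Q_1,
  and Q_(n+1) is the Cartesian product of Q_n and Q_1; a Gray code maps C_4 onto Q_2.
\<close>

subsection \<open>Isomorphisms and Cartesian products\<close>

lemma graph_iso_sym: "graph_iso G H \<Longrightarrow> graph_iso H G"
proof -
  assume "graph_iso G H"
  then obtain f where f: "bij_betw f (verts G) (verts H)"
    and adj_f: "\<forall>u\<in>verts G. \<forall>v\<in>verts G. adj G u v \<longleftrightarrow> adj H (f u) (f v)"
    unfolding graph_iso_def by blast
  let ?g = "inv_into (verts G) f"
  have "adj H u v \<longleftrightarrow> adj G (?g u) (?g v)" if "u \<in> verts H" "v \<in> verts H" for u v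
    using that f adj_f bij_betw_inv_into_right[OF f] bij_betw_imp_surj_on[OF f]
    by (metis inv_into_into)
  with bij_betw_inv_into[OF f] show ?thesis
    unfolding graph_iso_def by blast
qed

lemma graph_iso_trans: "graph_iso G H \<Longrightarrow> graph_iso H K \<Longrightarrow> graph_iso G K"
  unfolding graph_iso_def
proof (elim exE conjE)
  fix f g
  assume f: "bij_betw f (verts G) (verts H)" "\<forall>u\<in>verts G. \<forall>v\<in>verts G. adj G u v = adj H (f u) (f v)"
    and g: "bij_betw g (verts H) (verts K)" "\<forall>u\<in>verts H. \<forall>v\<in>verts H. adj H u v = adj K (g u) (g v)"
  have "bij_betw (g \<circ> f) (verts G) (verts K)"
    using f(1) g(1) by (rule bij_betw_trans)
  moreover have "adj G u v = adj K ((g \<circ> f) u) ((g \<circ> f) v)" if "u \<in> verts G" "v \<in> verts G" for u v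
  proof -
    have "f u \<in> verts H" "f v \<in> verts H"
      using that f(1) by (simp_all add: bij_betw_apply)
    with that f(2) g(2) show ?thesis by simp
  qed
  ultimately show "\<exists>h. bij_betw h (verts G) (verts K) \<and>
      (\<forall>u\<in>verts G. \<forall>v\<in>verts G. adj G u v = adj K (h u) (h v))"
    by blast
qed

lemma verts_cart_prod [simp]: "verts (cart_prod G H) = verts G \<times> verts H"
  by (simp add: cart_prod_def verts_def)

lemma adj_cart_prod:
  "adj (cart_prod G H) (a, b) (c, d) \<longleftrightarrow>
     (adj G a c \<and> b = d \<and> b \<in> verts H) \<or> (a = c \<and> a \<in> verts G \<and> adj H b d)"
  unfolding adj_def cart_prod_def edges_def
  by (auto simp: doubleton_eq_iff; metis insert_commute)

lemma graph_adjD: "graph G \<Longrightarrow> adj G u v \<Longrightarrow> u \<in> verts G \<and> v \<in> verts G \<and> u \<noteq> v"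
  unfolding graph_def adj_def by (fastforce simp: doubleton_eq_iff)

lemma graph_cart_prod:
  assumes "graph G" "graph H"
  shows "graph (cart_prod G H)"
  unfolding graph_def
proof (intro conjI ballI)
  show "finite (verts (cart_prod G H))"
    using assms by (simp add: graph_def)
next
  fix e assume "e \<in> edges (cart_prod G H)"
  then show "\<exists>x y. e = {x, y} \<and> x \<noteq> y \<and> x \<in> verts (cart_prod G H) \<and> y \<in> verts (cart_prod G H)"
    using graph_adjD[OF assms(1)] graph_adjD[OF assms(2)] unfolding verts_cart_prod
    by (fastforce simp: cart_prod_def edges_def)
qed

lemma graph_iso_cart_prod:
  assumes "graph_iso G G'" "graph_iso H H'"
  shows "graph_iso (cart_prod G H) (cart_prod G' H')"
proof -
  from assms obtain f g where f: "bij_betw f (verts G) (verts G')"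
      "\<forall>u\<in>verts G. \<forall>v\<in>verts G. adj G u v = adj G' (f u) (f v)"
    and g: "bij_betw g (verts H) (verts H')"
      "\<forall>u\<in>verts H. \<forall>v\<in>verts H. adj H u v = adj H' (g u) (g v)"
    unfolding graph_iso_def by blast
  have "adj (cart_prod G H) (a, b) (c, d) \<longleftrightarrow> adj (cart_prod G' H') (f a, g b) (f c, g d)"
    if "a \<in> verts G" "c \<in> verts G" "b \<in> verts H" "d \<in> verts H" for a b c d
    using that f g unfolding adj_cart_prod
    by (auto simp: bij_betw_def inj_on_eq_iff)
  with bij_betw_map_prod[OF f(1) g(1)] show ?thesis
    unfolding graph_iso_def by (intro exI[of _ "map_prod f g"]) auto
qed

subsection \<open>The IR-graph\<close>

lemma finite_irredundant: "graph G \<Longrightarrow> irredundant G D \<Longrightarrow> finite D"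
  unfolding irredundant_def graph_def by (metis finite_subset)

lemma finite_irredundant_cards:
  assumes "graph G"
  shows "finite {card D | D. irredundant G D}"
proof -
  have "{card D | D. irredundant G D} \<subseteq> {..card (verts G)}"
    using assms unfolding irredundant_def graph_def by (auto intro: card_mono)
  then show ?thesis
    by (rule finite_subset) simp
qed

lemma card_le_IR: "graph G \<Longrightarrow> irredundant G D \<Longrightarrow> card D \<le> IR G"
  unfolding IR_def using finite_irredundant_cards by (blast intro: Max_ge)

lemma IR_sets_nonempty:
  assumes "graph G"
  obtains D where "D \<in> IR_sets G"
proof -
  have "irredundant G {}"
    unfolding irredundant_def by simp
  then have "IR G \<in> {card D | D. irredundant G D}"
    unfolding IR_def using finite_irredundant_cards[OF assms] by (intro Max_in) auto
  then show ?thesis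
    using that unfolding IR_sets_def by auto
qed

definition IR_swap :: "'a graph \<Rightarrow> 'a set \<Rightarrow> 'a set \<Rightarrow> bool" where
  "IR_swap G X Y \<longleftrightarrow> (\<exists>u\<in>X. \<exists>v\<in>Y. adj G u v \<and> Y = X - {u} \<union> {v})"

lemma verts_IR_graph_of [simp]: "verts (IR_graph_of G) = IR_sets G"
  by (simp add: IR_graph_of_def verts_def)

lemma adj_IR_graph_of:
  "adj (IR_graph_of G) X Y \<longleftrightarrow>
     X \<in> IR_sets G \<and> Y \<in> IR_sets G \<and> (IR_swap G X Y \<or> IR_swap G Y X)"
  unfolding adj_def IR_graph_of_def edges_def IR_swap_def
  by (auto simp: doubleton_eq_iff)

subsection \<open>Relabelling vertices\<close>

definition map_graph :: "('a \<Rightarrow> 'b) \<Rightarrow> 'a graph \<Rightarrow> 'b graph" where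
  "map_graph f G = (f ` verts G, image f ` edges G)"

lemma verts_map_graph [simp]: "verts (map_graph f G) = f ` verts G"
  by (simp add: map_graph_def verts_def)

lemma adj_map_graph:
  assumes f: "inj f"
  shows "adj (map_graph f G) (f u) (f v) \<longleftrightarrow> adj G u v"
proof -
  have "inj (image f)"
    using f by (simp add: inj_def inj_image_eq_iff)
  then have "f ` {u, v} \<in> image f ` edges G \<longleftrightarrow> {u, v} \<in> edges G"
    by (rule inj_image_mem_iff)
  then show ?thesis
    by (simp add: adj_def map_graph_def edges_def)
qed

lemma adj_map_graphD:
  assumes "adj (map_graph f G) x y"
  shows "x \<in> range f" "y \<in> range f"
proof -
  obtain e where "{x, y} = f ` e"
    using assms unfolding adj_def map_graph_def edges_def by auto
  then have "x \<in> f ` e" "y \<in> f ` e"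
    by blast+
  then show "x \<in> range f" "y \<in> range f"
    by blast+
qed

lemma graph_map_graph:
  assumes f: "inj f" and G: "graph G"
  shows "graph (map_graph f G)"
  unfolding graph_def
proof (intro conjI ballI)
  show "finite (verts (map_graph f G))"
    using G by (simp add: graph_def)
next
  fix e assume "e \<in> edges (map_graph f G)"
  then obtain u v where "e = {f u, f v}" "u \<noteq> v" "u \<in> verts G" "v \<in> verts G"
    using G unfolding map_graph_def edges_def graph_def by auto
  with f show "\<exists>x y. e = {x, y} \<and> x \<noteq> y \<and> x \<in> verts (map_graph f G) \<and> y \<in> verts (map_graph f G)"
    by (intro exI[of _ "f u"] exI[of _ "f v"]) (simp add: inj_eq)
qed

lemma cnbhd_map_graph: "inj f \<Longrightarrow> cnbhd (map_graph f G) (f v) = f ` cnbhd G v"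
  unfolding cnbhd_def by (auto simp: adj_map_graph)

lemma cnbhd_set_map_graph: "inj f \<Longrightarrow> cnbhd_set (map_graph f G) (f ` S) = f ` cnbhd_set G S"
  unfolding cnbhd_set_def by (simp add: cnbhd_map_graph image_UN)

lemma PN_map_graph:
  assumes f: "inj f"
  shows "PN (map_graph f G) (f v) (f ` D) = f ` PN G v D"
proof -
  have "f ` D - {f v} = f ` (D - {v})"
    using f by (simp add: image_set_diff)
  then have "cnbhd_set (map_graph f G) (f ` D - {f v}) = f ` cnbhd_set G (D - {v})"
    by (simp only: cnbhd_set_map_graph[OF f])
  with f show ?thesis
    unfolding PN_def by (simp add: cnbhd_map_graph image_set_diff)
qed

lemma irredundant_map_graph_image:
  "inj f \<Longrightarrow> irredundant (map_graph f G) (f ` D) \<longleftrightarrow> irredundant G D"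
  unfolding irredundant_def by (simp add: PN_map_graph inj_image_subset_iff)

lemma irredundant_map_graph:
  "inj f \<Longrightarrow> irredundant (map_graph f G) D' \<longleftrightarrow> (\<exists>D. D' = f ` D \<and> irredundant G D)"
  using irredundant_map_graph_image[of f G]
  by (metis irredundant_def subset_imageE verts_map_graph)

lemma IR_map_graph:
  assumes f: "inj f"
  shows "IR (map_graph f G) = IR G"
proof -
  have "{card D' | D'. irredundant (map_graph f G) D'} = {card (f ` D) | D. irredundant G D}"
    using f by (auto simp: irredundant_map_graph)
  also have "\<dots> = {card D | D. irredundant G D}"
    using f by (simp add: card_image inj_on_subset)
  finally show ?thesis
    unfolding IR_def by simp
qed

lemma IR_sets_map_graph: "inj f \<Longrightarrow> IR_sets (map_graph f G) = image f ` IR_sets G"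
  unfolding IR_sets_def
  by (auto simp: IR_map_graph irredundant_map_graph card_image inj_on_subset)

lemma IR_swap_map_graph:
  assumes f: "inj f"
  shows "IR_swap (map_graph f G) (f ` X) (f ` Y) \<longleftrightarrow> IR_swap G X Y"
proof -
  have "f ` Y = f ` X - {f u} \<union> {f v} \<longleftrightarrow> Y = X - {u} \<union> {v}" for u v
  proof -
    have "f ` X - {f u} \<union> {f v} = f ` (X - {u} \<union> {v})"
      using f by (simp add: image_set_diff)
    then show ?thesis
      using f by (simp only: inj_image_eq_iff)
  qed
  then show ?thesis
    unfolding IR_swap_def using f by (auto simp: adj_map_graph)
qed

lemma graph_iso_IR_graph_of_map_graph:
  assumes f: "inj f"
  shows "graph_iso (IR_graph_of G) (IR_graph_of (map_graph f G))"
  unfolding graph_iso_def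
proof (intro exI[of _ "image f"] conjI ballI)
  have "inj_on (image f) (IR_sets G)"
    using f by (simp add: inj_on_def inj_image_eq_iff)
  then show "bij_betw (image f) (verts (IR_graph_of G)) (verts (IR_graph_of (map_graph f G)))"
    using f by (simp add: IR_sets_map_graph bij_betw_imageI)
  show "adj (IR_graph_of G) X Y \<longleftrightarrow> adj (IR_graph_of (map_graph f G)) (f ` X) (f ` Y)"
    if "X \<in> verts (IR_graph_of G)" "Y \<in> verts (IR_graph_of G)" for X Y
    using that f by (simp add: adj_IR_graph_of IR_sets_map_graph IR_swap_map_graph)
qed

lemma is_IR_graphI:
  fixes G :: "'c::countable graph"
  assumes "graph G" "graph H" "graph_iso (IR_graph_of G) H"
  shows "is_IR_graph H"
  unfolding is_IR_graph_def
proof (intro conjI exI)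
  show "graph H" by fact
  show "graph (map_graph to_nat G)"
    using assms(1) by (simp add: graph_map_graph)
  show "graph_iso (IR_graph_of (map_graph to_nat G)) H"
    using graph_iso_sym[OF graph_iso_IR_graph_of_map_graph[OF inj_to_nat]] assms(3)
    by (rule graph_iso_trans)
qed

lemma is_IR_graph_iso: "is_IR_graph H \<Longrightarrow> graph_iso H H' \<Longrightarrow> graph H' \<Longrightarrow> is_IR_graph H'"
  unfolding is_IR_graph_def using graph_iso_trans by blast

subsection \<open>Disjoint unions\<close>

lemma Plus_vimage_Inl_Inr: "X = Inl -` X <+> Inr -` X"
proof (rule set_eqI)
  fix x :: "'a + 'b"
  show "x \<in> X \<longleftrightarrow> x \<in> Inl -` X <+> Inr -` X"
    by (cases x) auto
qed

lemma Plus_eq_Plus_iff: "A <+> B = C <+> D \<longleftrightarrow> A = C \<and> B = D"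
proof
  assume eq: "A <+> B = C <+> D"
  have "Inl -` (A <+> B) = A" "Inr -` (A <+> B) = B" "Inl -` (C <+> D) = C" "Inr -` (C <+> D) = D"
    by auto
  with eq show "A = C \<and> B = D"
    by metis
qed simp

lemma Ball_Plus: "(\<forall>x\<in>A <+> B. P x) \<longleftrightarrow> (\<forall>a\<in>A. P (Inl a)) \<and> (\<forall>b\<in>B. P (Inr b))"
  by blast

lemma Plus_swap_Inl: "(A1 <+> A2) - {Inl a} \<union> {Inl b} = (A1 - {a} \<union> {b}) <+> A2"
  by auto

lemma Plus_swap_Inr: "(A1 <+> A2) - {Inr c} \<union> {Inr d} = A1 <+> (A2 - {c} \<union> {d})"
  by auto

definition disjoint_union :: "'a graph \<Rightarrow> 'b graph \<Rightarrow> ('a + 'b) graph" where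
  "disjoint_union G H = (verts G <+> verts H, image Inl ` edges G \<union> image Inr ` edges H)"

lemma verts_disjoint_union [simp]: "verts (disjoint_union G H) = verts G <+> verts H"
  by (simp add: disjoint_union_def verts_def)

lemma adj_disjoint_union_iff:
  "adj (disjoint_union G H) x y \<longleftrightarrow> adj (map_graph Inl G) x y \<or> adj (map_graph Inr H) x y"
  by (simp add: adj_def disjoint_union_def map_graph_def edges_def)

lemma adj_disjoint_union [simp]:
  "adj (disjoint_union G H) (Inl a) (Inl b) \<longleftrightarrow> adj G a b"
  "adj (disjoint_union G H) (Inr c) (Inr d) \<longleftrightarrow> adj H c d"
  "\<not> adj (disjoint_union G H) (Inl a) (Inr d)"
  "\<not> adj (disjoint_union G H) (Inr c) (Inl b)"
  unfolding adj_disjoint_union_iff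
  by (auto simp: adj_map_graph dest: adj_map_graphD)

lemma graph_disjoint_union:
  assumes "graph G" "graph H"
  shows "graph (disjoint_union G H)"
proof -
  have "graph (map_graph Inl G)" "graph (map_graph Inr H)"
    using assms by (simp_all add: graph_map_graph)
  moreover have "verts (disjoint_union G H) = verts (map_graph Inl G) \<union> verts (map_graph Inr H)"
    by (simp add: Plus_def)
  moreover have "edges (disjoint_union G H) = edges (map_graph Inl G) \<union> edges (map_graph Inr H)"
    by (simp add: disjoint_union_def map_graph_def edges_def)
  ultimately show ?thesis
    unfolding graph_def by (metis UnCI UnE finite_UnI)
qed

lemma cnbhd_disjoint_union:
  "cnbhd (disjoint_union G H) (Inl a) = Inl ` cnbhd G a"
  "cnbhd (disjoint_union G H) (Inr c) = Inr ` cnbhd H c"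
proof -
  have "{x \<in> verts G <+> verts H. adj (disjoint_union G H) x (Inl a)} = Inl ` {u \<in> verts G. adj G u a}"
    "{x \<in> verts G <+> verts H. adj (disjoint_union G H) x (Inr c)} = Inr ` {u \<in> verts H. adj H u c}"
    by auto
  then show "cnbhd (disjoint_union G H) (Inl a) = Inl ` cnbhd G a"
    "cnbhd (disjoint_union G H) (Inr c) = Inr ` cnbhd H c"
    unfolding cnbhd_def by simp_all
qed

lemma cnbhd_set_disjoint_union:
  "cnbhd_set (disjoint_union G H) (A <+> B) = cnbhd_set G A <+> cnbhd_set H B"
  unfolding cnbhd_set_def Plus_def by (simp add: cnbhd_disjoint_union image_UN UN_Un)

lemma PN_disjoint_union:
  "PN (disjoint_union G H) (Inl a) (A <+> B) = Inl ` PN G a A"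
  "PN (disjoint_union G H) (Inr c) (A <+> B) = Inr ` PN H c B"
proof -
  have "(A <+> B) - {Inl a} = (A - {a}) <+> B" "(A <+> B) - {Inr c} = A <+> (B - {c})"
    by auto
  then show "PN (disjoint_union G H) (Inl a) (A <+> B) = Inl ` PN G a A"
    "PN (disjoint_union G H) (Inr c) (A <+> B) = Inr ` PN H c B"
    unfolding PN_def by (auto simp: cnbhd_disjoint_union cnbhd_set_disjoint_union)
qed

lemma irredundant_disjoint_union:
  "irredundant (disjoint_union G H) (A <+> B) \<longleftrightarrow> irredundant G A \<and> irredundant H B"
  unfolding irredundant_def Ball_Plus by (auto simp: PN_disjoint_union)

lemma IR_disjoint_union:
  assumes G: "graph G" and H: "graph H"
  shows "IR (disjoint_union G H) = IR G + IR H"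
proof (rule antisym)
  have GH: "graph (disjoint_union G H)"
    using G H by (rule graph_disjoint_union)
  obtain D where D: "D \<in> IR_sets (disjoint_union G H)"
    using GH by (rule IR_sets_nonempty)
  define A B where "A = Inl -` D" and "B = Inr -` D"
  have D_eq: "D = A <+> B"
    unfolding A_def B_def by (rule Plus_vimage_Inl_Inr)
  have irr: "irredundant G A" "irredundant H B"
    using D unfolding D_eq IR_sets_def by (simp_all add: irredundant_disjoint_union)
  have "IR (disjoint_union G H) = card A + card B"
    using D irr G H unfolding D_eq IR_sets_def by (simp add: card_Plus finite_irredundant)
  also have "\<dots> \<le> IR G + IR H"
    using irr G H by (intro add_mono card_le_IR)
  finally show "IR (disjoint_union G H) \<le> IR G + IR H" .
next
  obtain A B where A: "A \<in> IR_sets G" and B: "B \<in> IR_sets H"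
    using G H by (meson IR_sets_nonempty)
  then have "IR G + IR H = card (A <+> B)"
    using G H unfolding IR_sets_def by (simp add: card_Plus finite_irredundant)
  also have "\<dots> \<le> IR (disjoint_union G H)"
    using A B G H unfolding IR_sets_def
    by (intro card_le_IR graph_disjoint_union) (simp_all add: irredundant_disjoint_union)
  finally show "IR G + IR H \<le> IR (disjoint_union G H)" .
qed

lemma IR_sets_disjoint_union:
  assumes G: "graph G" and H: "graph H"
  shows "A <+> B \<in> IR_sets (disjoint_union G H) \<longleftrightarrow> A \<in> IR_sets G \<and> B \<in> IR_sets H"
proof -
  have "card A + card B = IR G + IR H \<longleftrightarrow> card A = IR G \<and> card B = IR H"
    if "irredundant G A" "irredundant H B"
    using card_le_IR[OF G that(1)] card_le_IR[OF H that(2)] by linarith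
  then show ?thesis
    unfolding IR_sets_def
    using G H by (auto simp: irredundant_disjoint_union IR_disjoint_union card_Plus finite_irredundant)
qed

lemma IR_swap_disjoint_union_Inl:
  assumes "IR_swap G A1 B1"
  shows "IR_swap (disjoint_union G H) (A1 <+> A2) (B1 <+> A2)"
proof -
  obtain a b where "a \<in> A1" "b \<in> B1" "adj G a b" "B1 = A1 - {a} \<union> {b}"
    using assms unfolding IR_swap_def by blast
  then have "Inl a \<in> A1 <+> A2" "Inl b \<in> B1 <+> A2" "adj (disjoint_union G H) (Inl a) (Inl b)"
    "B1 <+> A2 = (A1 <+> A2) - {Inl a} \<union> {Inl b}"
    unfolding Plus_swap_Inl by auto
  then show ?thesis
    unfolding IR_swap_def by blast
qed

lemma IR_swap_disjoint_union_Inr: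
  assumes "IR_swap H A2 B2"
  shows "IR_swap (disjoint_union G H) (A1 <+> A2) (A1 <+> B2)"
proof -
  obtain c d where "c \<in> A2" "d \<in> B2" "adj H c d" "B2 = A2 - {c} \<union> {d}"
    using assms unfolding IR_swap_def by blast
  then have "Inr c \<in> A1 <+> A2" "Inr d \<in> A1 <+> B2" "adj (disjoint_union G H) (Inr c) (Inr d)"
    "A1 <+> B2 = (A1 <+> A2) - {Inr c} \<union> {Inr d}"
    unfolding Plus_swap_Inr by auto
  then show ?thesis
    unfolding IR_swap_def by blast
qed

lemma IR_swap_disjoint_unionD:
  assumes "IR_swap (disjoint_union G H) (A1 <+> A2) (B1 <+> B2)"
  shows "(IR_swap G A1 B1 \<and> A2 = B2) \<or> (A1 = B1 \<and> IR_swap H A2 B2)"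
proof -
  obtain x y where xy: "x \<in> A1 <+> A2" "y \<in> B1 <+> B2" "adj (disjoint_union G H) x y"
    "B1 <+> B2 = (A1 <+> A2) - {x} \<union> {y}"
    using assms unfolding IR_swap_def by blast
  from xy(1,2) show ?thesis
  proof (elim PlusE)
    fix a b assume ab: "a \<in> A1" "x = Inl a" "b \<in> B1" "y = Inl b"
    then have "B1 <+> B2 = (A1 - {a} \<union> {b}) <+> A2"
      using xy(4) unfolding Plus_swap_Inl[symmetric] by simp
    then have "B1 = A1 - {a} \<union> {b}" "A2 = B2"
      unfolding Plus_eq_Plus_iff by simp_all
    with ab xy(3) show ?thesis
      unfolding IR_swap_def by auto
  next
    fix c d assume cd: "c \<in> A2" "x = Inr c" "d \<in> B2" "y = Inr d"
    then have "B1 <+> B2 = A1 <+> (A2 - {c} \<union> {d})"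
      using xy(4) unfolding Plus_swap_Inr[symmetric] by simp
    then have "A1 = B1" "B2 = A2 - {c} \<union> {d}"
      unfolding Plus_eq_Plus_iff by simp_all
    with cd xy(3) show ?thesis
      unfolding IR_swap_def by auto
  qed (use xy(3) in simp_all)
qed

lemma IR_swap_disjoint_union:
  "IR_swap (disjoint_union G H) (A1 <+> A2) (B1 <+> B2) \<longleftrightarrow>
     (IR_swap G A1 B1 \<and> A2 = B2) \<or> (A1 = B1 \<and> IR_swap H A2 B2)"
  by (metis IR_swap_disjoint_unionD IR_swap_disjoint_union_Inl IR_swap_disjoint_union_Inr)

theorem graph_iso_IR_graph_of_disjoint_union:
  assumes G: "graph G" and H: "graph H"
  shows "graph_iso (cart_prod (IR_graph_of G) (IR_graph_of H)) (IR_graph_of (disjoint_union G H))"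
  unfolding graph_iso_def
proof (intro exI[of _ "\<lambda>(A, B). A <+> B"] conjI ballI)
  have "X \<in> (\<lambda>(A, B). A <+> B) ` (IR_sets G \<times> IR_sets H)" if "X \<in> IR_sets (disjoint_union G H)" for X
    using that Plus_vimage_Inl_Inr[of X] IR_sets_disjoint_union[OF G H]
    by (metis (no_types, lifting) SigmaI case_prod_conv image_eqI)
  then show "bij_betw (\<lambda>(A, B). A <+> B) (verts (cart_prod (IR_graph_of G) (IR_graph_of H)))
      (verts (IR_graph_of (disjoint_union G H)))"
    unfolding bij_betw_def inj_on_def
    by (auto simp: Plus_eq_Plus_iff IR_sets_disjoint_union[OF G H])
next
  fix X Y assume "X \<in> verts (cart_prod (IR_graph_of G) (IR_graph_of H))"
    "Y \<in> verts (cart_prod (IR_graph_of G) (IR_graph_of H))"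
  then obtain A1 A2 B1 B2 where XY: "X = (A1, A2)" "Y = (B1, B2)"
    "A1 \<in> IR_sets G" "A2 \<in> IR_sets H" "B1 \<in> IR_sets G" "B2 \<in> IR_sets H"
    by auto
  then show "adj (cart_prod (IR_graph_of G) (IR_graph_of H)) X Y \<longleftrightarrow>
      adj (IR_graph_of (disjoint_union G H)) ((\<lambda>(A, B). A <+> B) X) ((\<lambda>(A, B). A <+> B) Y)"
    unfolding XY(1,2) case_prod_conv adj_cart_prod adj_IR_graph_of IR_sets_disjoint_union[OF G H]
      IR_swap_disjoint_union verts_IR_graph_of
    by blast
qed

theorem is_IR_graph_cart_prod:
  assumes "is_IR_graph H1" "is_IR_graph H2"
  shows "is_IR_graph (cart_prod H1 H2)"
proof -
  obtain G1 :: "nat graph" where G1: "graph G1" "graph_iso (IR_graph_of G1) H1" and "graph H1"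
    using assms(1) unfolding is_IR_graph_def by blast
  obtain G2 :: "nat graph" where G2: "graph G2" "graph_iso (IR_graph_of G2) H2" and "graph H2"
    using assms(2) unfolding is_IR_graph_def by blast
  have "graph_iso (IR_graph_of (disjoint_union G1 G2)) (cart_prod H1 H2)"
    using graph_iso_sym[OF graph_iso_IR_graph_of_disjoint_union[OF G1(1) G2(1)]]
      graph_iso_cart_prod[OF G1(2) G2(2)]
    by (rule graph_iso_trans)
  moreover have "graph (disjoint_union G1 G2)"
    using G1(1) G2(1) by (rule graph_disjoint_union)
  moreover have "graph (cart_prod H1 H2)"
    using \<open>graph H1\<close> \<open>graph H2\<close> by (rule graph_cart_prod)
  ultimately show ?thesis
    by (intro is_IR_graphI)
qed

subsection \<open>Hypercubes\<close>

definition diff_positions :: "nat \<Rightarrow> bool list \<Rightarrow> bool list \<Rightarrow> nat set" where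
  "diff_positions n xs ys = {i. i < n \<and> xs ! i \<noteq> ys ! i}"

lemma verts_hypercube [simp]: "verts (hypercube n) = {xs. length xs = n}"
  by (simp add: hypercube_def verts_def)

lemma adj_hypercube:
  "adj (hypercube n) xs ys \<longleftrightarrow> length xs = n \<and> length ys = n \<and> card (diff_positions n xs ys) = 1"
proof -
  have "diff_positions n xs ys = diff_positions n ys xs"
    unfolding diff_positions_def by auto
  then show ?thesis
    unfolding adj_def hypercube_def edges_def diff_positions_def[symmetric]
    by (auto simp: doubleton_eq_iff)
qed

lemma diff_positions_empty_iff:
  "length xs = n \<Longrightarrow> length ys = n \<Longrightarrow> diff_positions n xs ys = {} \<longleftrightarrow> xs = ys"
  unfolding diff_positions_def by (auto intro: nth_equalityI)

lemma graph_hypercube: "graph (hypercube n)"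
  unfolding graph_def
proof (intro conjI ballI)
  show "finite (verts (hypercube n))"
    using finite_lists_length_eq[of "UNIV :: bool set" n] by simp
next
  fix e assume "e \<in> edges (hypercube n)"
  then obtain xs ys where e: "e = {xs, ys}" and "adj (hypercube n) xs ys"
    unfolding hypercube_def edges_def adj_def by auto
  then have "length xs = n" "length ys = n" "card (diff_positions n xs ys) = 1"
    by (simp_all add: adj_hypercube)
  moreover have "xs \<noteq> ys"
  proof
    assume "xs = ys"
    then have "diff_positions n xs ys = {}"
      by (simp add: diff_positions_def)
    with \<open>card (diff_positions n xs ys) = 1\<close> show False
      by simp
  qed
  ultimately show "\<exists>x y. e = {x, y} \<and> x \<noteq> y \<and> x \<in> verts (hypercube n) \<and> y \<in> verts (hypercube n)"
    using e by auto
qed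

lemma diff_positions_append:
  assumes "length xs = n" "length ys = n" "length xs' = m" "length ys' = m"
  shows "diff_positions (n + m) (xs @ xs') (ys @ ys') =
    diff_positions n xs ys \<union> (\<lambda>i. i + n) ` diff_positions m xs' ys'"
proof (rule set_eqI)
  fix i
  show "i \<in> diff_positions (n + m) (xs @ xs') (ys @ ys') \<longleftrightarrow>
      i \<in> diff_positions n xs ys \<union> (\<lambda>i. i + n) ` diff_positions m xs' ys'"
  proof (cases "i < n")
    case True
    then show ?thesis
      using assms by (auto simp: diff_positions_def nth_append)
  next
    case False
    then have "i \<in> (\<lambda>i. i + n) ` diff_positions m xs' ys' \<longleftrightarrow> i - n \<in> diff_positions m xs' ys'"
      by (auto simp: image_iff intro: bexI[of _ "i - n"])
    then show ?thesis
      using assms False by (auto simp: diff_positions_def nth_append)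
  qed
qed

lemma card_diff_positions_append:
  assumes "length xs = n" "length ys = n" "length xs' = m" "length ys' = m"
  shows "card (diff_positions (n + m) (xs @ xs') (ys @ ys')) =
    card (diff_positions n xs ys) + card (diff_positions m xs' ys')"
proof -
  have "finite (diff_positions n xs ys)" "finite (diff_positions m xs' ys')"
    unfolding diff_positions_def by auto
  moreover have "diff_positions n xs ys \<inter> (\<lambda>i. i + n) ` diff_positions m xs' ys' = {}"
    unfolding diff_positions_def by auto
  ultimately show ?thesis
    unfolding diff_positions_append[OF assms] by (simp add: card_Un_disjoint card_image)
qed

theorem graph_iso_cart_prod_hypercube:
  "graph_iso (cart_prod (hypercube n) (hypercube m)) (hypercube (n + m))"
  unfolding graph_iso_def
proof (intro exI[of _ "\<lambda>(xs, ys). xs @ ys"] conjI ballI)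
  have "zs \<in> (\<lambda>(xs, ys). xs @ ys) ` ({xs. length xs = n} \<times> {ys. length ys = m})"
    if "length zs = n + m" for zs
    using that by (intro image_eqI[of _ _ "(take n zs, drop n zs)"]) auto
  then show "bij_betw (\<lambda>(xs, ys). xs @ ys) (verts (cart_prod (hypercube n) (hypercube m)))
      (verts (hypercube (n + m)))"
    unfolding bij_betw_def inj_on_def by auto
next
  fix x y assume "x \<in> verts (cart_prod (hypercube n) (hypercube m))"
    "y \<in> verts (cart_prod (hypercube n) (hypercube m))"
  then obtain xs xs' ys ys' where xy: "x = (xs, xs')" "y = (ys, ys')"
    and len: "length xs = n" "length xs' = m" "length ys = n" "length ys' = m"
    by auto
  have "card (diff_positions n xs ys) = 0 \<longleftrightarrow> xs = ys"
    "card (diff_positions m xs' ys') = 0 \<longleftrightarrow> xs' = ys'"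
    using len diff_positions_empty_iff by (simp_all add: diff_positions_def)
  with len show "adj (cart_prod (hypercube n) (hypercube m)) x y \<longleftrightarrow>
      adj (hypercube (n + m)) ((\<lambda>(xs, ys). xs @ ys) x) ((\<lambda>(xs, ys). xs @ ys) y)"
    unfolding xy adj_cart_prod adj_hypercube
    by (auto simp: card_diff_positions_append)
qed

definition K2 :: "bool graph" where
  "K2 = (UNIV, {{False, True}})"

lemma adj_K2: "adj K2 u v \<longleftrightarrow> u \<noteq> v"
  unfolding adj_def K2_def edges_def by (cases u; cases v) (auto simp: doubleton_eq_iff)

lemma verts_K2 [simp]: "verts K2 = UNIV"
  by (simp add: K2_def verts_def)

lemma graph_K2: "graph K2"
  unfolding graph_def
proof (intro conjI ballI)
  fix e assume "e \<in> edges K2"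
  then have "e = {False, True}"
    by (simp add: K2_def edges_def)
  then show "\<exists>u v. e = {u, v} \<and> u \<noteq> v \<and> u \<in> verts K2 \<and> v \<in> verts K2"
    by (intro exI[of _ False] exI[of _ True]) simp
qed simp

lemma cnbhd_K2: "cnbhd K2 v = UNIV"
  unfolding cnbhd_def by (auto simp: adj_K2)

lemma irredundant_K2: "irredundant K2 D \<longleftrightarrow> D \<noteq> UNIV"
proof
  assume irr: "irredundant K2 D"
  show "D \<noteq> UNIV"
  proof
    assume "D = UNIV"
    with irr have "PN K2 False UNIV \<noteq> {}"
      unfolding irredundant_def by blast
    moreover have "UNIV - {False} = {True}"
      by auto
    ultimately show False
      unfolding PN_def cnbhd_set_def by (simp add: cnbhd_K2)
  qed
next
  assume "D \<noteq> UNIV"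
  have "D - {v} = {}" if "v \<in> D" for v
  proof (rule ccontr)
    assume "D - {v} \<noteq> {}"
    then obtain w where "w \<in> D" "w \<noteq> v"
      by blast
    then have "x \<in> D" for x
      using \<open>v \<in> D\<close> by (cases x; cases v; cases w) simp_all
    with \<open>D \<noteq> UNIV\<close> show False
      by auto
  qed
  then have "PN K2 v D = UNIV" if "v \<in> D" for v
    using that unfolding PN_def cnbhd_set_def by (simp add: cnbhd_K2)
  then show "irredundant K2 D"
    unfolding irredundant_def by simp
qed

lemma IR_sets_K2: "IR_sets K2 = {{False}, {True}}"
proof -
  obtain D where D: "D \<in> IR_sets K2"
    using graph_K2 by (rule IR_sets_nonempty)
  then have "card D < card (UNIV :: bool set)"
    unfolding IR_sets_def irredundant_K2 by (intro psubset_card_mono) auto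
  then have "IR K2 \<le> 1"
    using D unfolding IR_sets_def by simp
  moreover have "1 \<le> IR K2"
  proof -
    have "irredundant K2 {True}"
      unfolding irredundant_K2 by auto
    then show ?thesis
      using card_le_IR[OF graph_K2] by fastforce
  qed
  ultimately have "IR K2 = 1"
    by simp
  then show ?thesis
    unfolding IR_sets_def irredundant_K2 by (auto simp: card_1_singleton_iff)
qed

lemma adj_hypercube_1: "adj (hypercube 1) [a] [b] \<longleftrightarrow> a \<noteq> b"
proof -
  have "diff_positions 1 [a] [b] = (if a = b then {} else {0})"
    unfolding diff_positions_def by auto
  then show ?thesis
    unfolding adj_hypercube by simp
qed

lemma graph_iso_IR_graph_of_K2: "graph_iso (IR_graph_of K2) (hypercube 1)"
  unfolding graph_iso_def
proof (intro exI[of _ "\<lambda>X. [True \<in> X]"] conjI ballI)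
  have "verts (hypercube 1) = {[False], [True]}"
    by (auto simp: length_Suc_conv)
  then show "bij_betw (\<lambda>X. [True \<in> X]) (verts (IR_graph_of K2)) (verts (hypercube 1))"
    unfolding bij_betw_def inj_on_def by (auto simp: IR_sets_K2)
next
  fix X Y assume "X \<in> verts (IR_graph_of K2)" "Y \<in> verts (IR_graph_of K2)"
  then show "adj (IR_graph_of K2) X Y \<longleftrightarrow> adj (hypercube 1) [True \<in> X] [True \<in> Y]"
    unfolding adj_hypercube_1 adj_IR_graph_of IR_swap_def
    by (auto simp: IR_sets_K2 adj_K2)
qed

lemma is_IR_graph_hypercube_1: "is_IR_graph (hypercube 1)"
  using graph_K2 graph_hypercube graph_iso_IR_graph_of_K2 by (rule is_IR_graphI)

theorem is_IR_graph_hypercube: "n \<ge> 1 \<Longrightarrow> is_IR_graph (hypercube n)"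
proof (induction n rule: dec_induct)
  case base
  show ?case
    by (rule is_IR_graph_hypercube_1)
next
  case (step n)
  have "is_IR_graph (cart_prod (hypercube n) (hypercube 1))"
    using step.IH is_IR_graph_hypercube_1 by (rule is_IR_graph_cart_prod)
  moreover have "graph_iso (cart_prod (hypercube n) (hypercube 1)) (hypercube (Suc n))"
    using graph_iso_cart_prod_hypercube[of n 1] by simp
  ultimately show ?case
    using graph_hypercube by (rule is_IR_graph_iso)
qed

lemma verts_C4: "verts C4 = {0, 1, 2, 3}"
  by (simp add: C4_def verts_def)

lemma adj_C4: "adj C4 u v \<longleftrightarrow> {u, v} \<in> {{0, 1}, {1, 2}, {2, 3}, {3, 0}}"
  by (simp add: adj_def C4_def edges_def)

lemma graph_C4: "graph C4"
  unfolding graph_def verts_C4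
proof (intro conjI ballI)
  have doubleton: "\<exists>u v. {a, b} = {u, v} \<and> u \<noteq> v \<and> u \<in> V \<and> v \<in> V"
    if "a \<noteq> b" "a \<in> V" "b \<in> V" for a b :: nat and V
    using that by blast
  fix e assume "e \<in> edges C4"
  then consider "e = {0, 1}" | "e = {1, 2}" | "e = {2, 3}" | "e = {3, 0}"
    by (auto simp: C4_def edges_def)
  then show "\<exists>u v. e = {u, v} \<and> u \<noteq> v \<and> u \<in> {0::nat, 1, 2, 3} \<and> v \<in> {0, 1, 2, 3}"
    by cases (simp only:; rule doubleton; simp)+
qed simp

lemma adj_hypercube_2:
  "adj (hypercube 2) [a, b] [c, d] \<longleftrightarrow> (a = c \<and> b \<noteq> d) \<or> (a \<noteq> c \<and> b = d)"
proof -
  have "diff_positions 2 [a, b] [c, d] = (if a \<noteq> c then {0} else {}) \<union> (if b \<noteq> d then {1} else {})"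
    unfolding diff_positions_def by (auto simp: less_2_cases_iff)
  then show ?thesis
    unfolding adj_hypercube by auto
qed

definition gray_code_2 :: "nat \<Rightarrow> bool list" where
  "gray_code_2 n = [[False, False], [False, True], [True, True], [True, False]] ! n"

theorem graph_iso_C4_hypercube_2: "graph_iso C4 (hypercube 2)"
  unfolding graph_iso_def
proof (intro exI[of _ gray_code_2] conjI ballI)
  have "verts (hypercube 2) = {[False, False], [False, True], [True, True], [True, False]}"
    by (auto simp: numeral_2_eq_2 length_Suc_conv)
  then show "bij_betw gray_code_2 (verts C4) (verts (hypercube 2))"
    unfolding bij_betw_def inj_on_def verts_C4 by (auto simp: gray_code_2_def)
next
  fix u v assume "u \<in> verts C4" "v \<in> verts C4"
  then have "u \<in> {0, 1, 2, 3}" "v \<in> {0, 1, 2, 3}"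
    unfolding verts_C4 .
  then show "adj C4 u v \<longleftrightarrow> adj (hypercube 2) (gray_code_2 u) (gray_code_2 v)"
    unfolding adj_C4 gray_code_2_def
    by (elim insertE emptyE) (simp_all add: adj_hypercube_2 doubleton_eq_iff)
qed

theorem proposition2p1:
  shows "(\<forall>(H1 :: 'a graph) (H2 :: 'b graph).
            is_IR_graph H1 \<and> is_IR_graph H2 \<longrightarrow> is_IR_graph (cart_prod H1 H2))
       \<and> (\<forall>n \<ge> 1. is_IR_graph (hypercube n))
       \<and> graph_iso C4 (hypercube 2) \<and> is_IR_graph C4"
proof (intro conjI allI impI)
  fix H1 :: "'a graph" and H2 :: "'b graph"
  assume "is_IR_graph H1 \<and> is_IR_graph H2"
  then show "is_IR_graph (cart_prod H1 H2)"
    by (blast intro: is_IR_graph_cart_prod)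
next
  fix n :: nat
  assume "n \<ge> 1"
  then show "is_IR_graph (hypercube n)"
    by (rule is_IR_graph_hypercube)
next
  show "graph_iso C4 (hypercube 2)"
    by (rule graph_iso_C4_hypercube_2)
next
  have "is_IR_graph (hypercube 2)"
    by (rule is_IR_graph_hypercube) simp
  then show "is_IR_graph C4"
    using graph_iso_sym[OF graph_iso_C4_hypercube_2] graph_C4 by (rule is_IR_graph_iso)
qed

end
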